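(* If $G$ is a graph with a min-max clique covering satisfying simple intersection, then its compressed cliques graph $\mathcal{C}(G)$ does not contain a suspended cycle.
   Context: A clique covering of a graph is a set of cliques such that every edge lies in at least one of them; $\operatorname{cc}(G)$ is its minimum size. A min-max clique covering is a clique covering of size $\operatorname{cc}(G)$ consisting of maximal cliques; it has simple intersection if no three distinct cliques of it share a vertex. Given such a covering $\{C_1,\dots,C_\ell\}$, put $C_{i,j}=C_i\cap C_j$ ($i\ne j$) and $C_{i,i}=C_i\setminus\bigcup_{j\ne i}C_j$; the compressed cliques graph $\mathcal{C}(G)$ has a vertex $v_{i,j}$ for each non-empty $C_{i,j}$ (including $i=j$), with $v_{i,j}\sim v_{i',j'}$ iff $\{i,j\}\cap\{i',j'\}\ne\emptyset$. A cycle $u_1u_2\cdots u_tu_1$ in a graph $X$ is suspended if exactly one of $u_1,\dots,u_t$ has degree larger than two in $X$ and all the others have degree two in $X$. *)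

theory Defs
  imports Main
begin

definition sgraph :: "'a set \<Rightarrow> ('a \<Rightarrow> 'a \<Rightarrow> bool) \<Rightarrow> bool" where
  "sgraph V E \<longleftrightarrow> finite V \<and> (\<forall>x y. E x y \<longrightarrow> x \<in> V \<and> y \<in> V)
     \<and> (\<forall>x y. E x y \<longrightarrow> E y x) \<and> (\<forall>x. \<not> E x x)"

definition clique :: "'a set \<Rightarrow> ('a \<Rightarrow> 'a \<Rightarrow> bool) \<Rightarrow> 'a set \<Rightarrow> bool" where
  "clique V E C \<longleftrightarrow> C \<subseteq> V \<and> (\<forall>x\<in>C. \<forall>y\<in>C. x \<noteq> y \<longrightarrow> E x y)"

definition maximal_clique :: "'a set \<Rightarrow> ('a \<Rightarrow> 'a \<Rightarrow> bool) \<Rightarrow> 'a set \<Rightarrow> bool" where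
  "maximal_clique V E C \<longleftrightarrow> clique V E C \<and> (\<forall>D. clique V E D \<and> C \<subseteq> D \<longrightarrow> D = C)"

definition clique_covering :: "'a set \<Rightarrow> ('a \<Rightarrow> 'a \<Rightarrow> bool) \<Rightarrow> 'a set set \<Rightarrow> bool" where
  "clique_covering V E \<C> \<longleftrightarrow> finite \<C> \<and> (\<forall>C\<in>\<C>. clique V E C)
     \<and> (\<forall>x y. E x y \<longrightarrow> (\<exists>C\<in>\<C>. x \<in> C \<and> y \<in> C))"

definition cc :: "'a set \<Rightarrow> ('a \<Rightarrow> 'a \<Rightarrow> bool) \<Rightarrow> nat" where
  "cc V E = (LEAST k. \<exists>\<C>. clique_covering V E \<C> \<and> card \<C> = k)"

definition min_max_clique_covering :: "'a set \<Rightarrow> ('a \<Rightarrow> 'a \<Rightarrow> bool) \<Rightarrow> 'a set set \<Rightarrow> bool" where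
  "min_max_clique_covering V E \<C> \<longleftrightarrow> clique_covering V E \<C> \<and> card \<C> = cc V E
     \<and> (\<forall>C\<in>\<C>. maximal_clique V E C)"

definition simple_intersection :: "'a set set \<Rightarrow> bool" where
  "simple_intersection \<C> \<longleftrightarrow> (\<forall>C1\<in>\<C>. \<forall>C2\<in>\<C>. \<forall>C3\<in>\<C>.
     C1 \<noteq> C2 \<and> C1 \<noteq> C3 \<and> C2 \<noteq> C3 \<longrightarrow> C1 \<inter> C2 \<inter> C3 = {})"

text \<open>Vertices of the compressed cliques graph are index sets S = {C_i} (for C_{i,i})
  or S = {C_i, C_j}, i \<noteq> j (for C_{i,j} = C_{j,i}).\<close>
definition cpart :: "'a set set \<Rightarrow> 'a set set \<Rightarrow> 'a set" where
  "cpart \<C> S = (if card S = 1 then \<Inter>S - \<Union>(\<C> - S) else \<Inter>S)"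

definition compressed_V :: "'a set set \<Rightarrow> 'a set set set" where
  "compressed_V \<C> = {S. S \<subseteq> \<C> \<and> (card S = 1 \<or> card S = 2) \<and> cpart \<C> S \<noteq> {}}"

definition compressed_E :: "'a set set \<Rightarrow> 'a set set \<Rightarrow> 'a set set \<Rightarrow> bool" where
  "compressed_E \<C> S T \<longleftrightarrow> S \<in> compressed_V \<C> \<and> T \<in> compressed_V \<C> \<and> S \<noteq> T \<and> S \<inter> T \<noteq> {}"

definition degree :: "'b set \<Rightarrow> ('b \<Rightarrow> 'b \<Rightarrow> bool) \<Rightarrow> 'b \<Rightarrow> nat" where
  "degree V E v = card {u\<in>V. E v u}"

definition suspended_cycle :: "'b set \<Rightarrow> ('b \<Rightarrow> 'b \<Rightarrow> bool) \<Rightarrow> 'b list \<Rightarrow> bool" where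
  "suspended_cycle V E us \<longleftrightarrow> length us \<ge> 3 \<and> distinct us \<and> set us \<subseteq> V
     \<and> (\<forall>i < length us. E (us ! i) (us ! ((i + 1) mod length us)))
     \<and> (\<exists>k < length us. degree V E (us ! k) > 2
          \<and> (\<forall>i < length us. i \<noteq> k \<longrightarrow> degree V E (us ! i) = 2))"

end

theory Submission
  imports Defs
begin

text \<open>Let H be the hub of a suspended cycle, A and B its neighbours on the cycle, and A', B'
  the next cycle vertices. Maximality makes the cliques an antichain, so every compressed
  vertex \<open>{i, j}\<close> has a neighbour containing j but not i. Hence A is no singleton \<open>{i}\<close>:
  otherwise \<open>A' = {i, j}\<close> would be adjacent to \<open>{i}\<close>, H and such a vertex. So \<open>A = {a, y}\<close>
  with \<open>a \<in> H\<close>, the neighbour of A avoiding a can only be A', and A, H are the only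
  compressed vertices containing a. Symmetrically B yields c. Then \<open>H = {a, c}\<close>, every
  neighbour of H contains a or c, and so H has degree at most two.\<close>

definition compressed_nbrs :: "'a set set \<Rightarrow> 'a set set \<Rightarrow> 'a set set set" where
  "compressed_nbrs \<C> S = {T \<in> compressed_V \<C>. T \<noteq> S \<and> T \<inter> S \<noteq> {}}"

lemma compressed_V_cases:
  assumes "S \<in> compressed_V \<C>"
  obtains i where "S = {i}" "i \<in> \<C>"
  | i j where "S = {i, j}" "i \<noteq> j" "i \<in> \<C>" "j \<in> \<C>"
  using assms unfolding compressed_V_def by (auto simp: card_1_singleton_iff card_2_iff)

lemma compressed_V_eq_doubleton:
  assumes "S \<in> compressed_V \<C>" "a \<in> S" "b \<in> S" "a \<noteq> b"
  shows "S = {a, b}"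
  using assms(1) by (cases rule: compressed_V_cases) (use assms(2-) in auto)

lemma finite_compressed_V: "finite \<C> \<Longrightarrow> finite (compressed_V \<C>)"
  by (rule finite_subset[of _ "Pow \<C>"]) (auto simp: compressed_V_def)

lemma compressed_E_sym: "compressed_E \<C> S T \<Longrightarrow> compressed_E \<C> T S"
  unfolding compressed_E_def by blast

lemma compressed_E_iff_nbrs:
  "compressed_E \<C> S T \<longleftrightarrow> S \<in> compressed_V \<C> \<and> T \<in> compressed_nbrs \<C> S"
  unfolding compressed_E_def compressed_nbrs_def by blast

lemma degree_compressed_eq_card_nbrs:
  "S \<in> compressed_V \<C> \<Longrightarrow>
    degree (compressed_V \<C>) (compressed_E \<C>) S = card (compressed_nbrs \<C> S)"
  unfolding degree_def compressed_E_iff_nbrs compressed_nbrs_def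
  by (rule arg_cong[where f = card]) auto

lemma compressed_vertex_through:
  assumes "d \<in> \<C>" "x \<in> d"
  obtains T where "T \<in> compressed_V \<C>" "d \<in> T" "x \<in> \<Inter>T"
proof (cases "\<exists>e \<in> \<C>. e \<noteq> d \<and> x \<in> e")
  case True
  then obtain e where "e \<in> \<C>" "e \<noteq> d" "x \<in> e" by blast
  then have "{d, e} \<in> compressed_V \<C>"
    using assms by (auto simp: compressed_V_def cpart_def)
  then show ?thesis using that \<open>x \<in> e\<close> assms(2) by auto
next
  case False
  then have "{d} \<in> compressed_V \<C>"
    using assms by (auto simp: compressed_V_def cpart_def)
  then show ?thesis using that assms(2) by auto
qed

lemma doubleton_nbr_avoiding:
  assumes antichain: "\<And>c d. c \<in> \<C> \<Longrightarrow> d \<in> \<C> \<Longrightarrow> d \<subseteq> c \<Longrightarrow> d = c"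
    and ij: "{i, j} \<in> compressed_V \<C>" "i \<noteq> j"
  obtains T where "T \<in> compressed_nbrs \<C> {i, j}" "j \<in> T" "i \<notin> T"
proof -
  have "i \<in> \<C>" "j \<in> \<C>" using ij(1) by (auto simp: compressed_V_def)
  then obtain x where x: "x \<in> j" "x \<notin> i" using antichain ij(2) by blast
  obtain T where T: "T \<in> compressed_V \<C>" "j \<in> T" "x \<in> \<Inter>T"
    using compressed_vertex_through[OF \<open>j \<in> \<C>\<close> x(1)] .
  have "i \<notin> T" using T(3) x(2) by blast
  then have "T \<in> compressed_nbrs \<C> {i, j}" using T(1,2) by (auto simp: compressed_nbrs_def)
  then show ?thesis using that T(2) \<open>i \<notin> T\<close> by blast
qed

lemma min_max_clique_covering_antichain:
  assumes "min_max_clique_covering V E \<C>" "c \<in> \<C>" "d \<in> \<C>" "d \<subseteq> c"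
  shows "d = c"
  using assms unfolding min_max_clique_covering_def maximal_clique_def by blast

lemma path_through_singleton_degree_ge_three:
  assumes fin: "finite \<C>"
    and antichain: "\<And>c d. c \<in> \<C> \<Longrightarrow> d \<in> \<C> \<Longrightarrow> d \<subseteq> c \<Longrightarrow> d = c"
    and HA: "compressed_E \<C> H {i}" and AA': "compressed_E \<C> {i} A'" and A'H: "A' \<noteq> H"
  shows "degree (compressed_V \<C>) (compressed_E \<C>) A' \<ge> 3"
proof -
  have A': "A' \<in> compressed_V \<C>" "i \<in> A'" "A' \<noteq> {i}" and "i \<in> H"
    using HA AA' by (auto simp: compressed_E_def)
  from A'(1) obtain j where A'_eq: "A' = {i, j}" "i \<noteq> j"
  proof (cases rule: compressed_V_cases)
    case (1 k)
    then show ?thesis using A'(2,3) by simp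
  next
    case (2 k l)
    then show ?thesis using that A'(2) by (metis insert_commute insertE singletonD)
  qed
  obtain T where T: "T \<in> compressed_nbrs \<C> A'" "j \<in> T" "i \<notin> T"
    using doubleton_nbr_avoiding[OF antichain _ A'_eq(2)] A'(1) unfolding A'_eq(1) by blast
  have "H \<noteq> A'" "H \<in> compressed_V \<C>" using A'H HA by (auto simp: compressed_E_def)
  then have "{{i}, H, T} \<subseteq> compressed_nbrs \<C> A'"
    using AA' T(1) \<open>i \<in> H\<close> A'_eq by (auto simp: compressed_E_iff_nbrs compressed_nbrs_def)
  moreover have "card {{i}, H, T} = 3"
  proof -
    have "T \<noteq> {i}" "T \<noteq> H" using T(3) \<open>i \<in> H\<close> by auto
    moreover have "{i} \<noteq> H" using HA by (auto simp: compressed_E_def)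
    ultimately show ?thesis by simp
  qed
  moreover have "finite (compressed_nbrs \<C> A')"
    using finite_compressed_V[OF fin] by (simp add: compressed_nbrs_def)
  ultimately show ?thesis
    using card_mono degree_compressed_eq_card_nbrs[OF A'(1)] by metis
qed

lemma degree_two_path_private_clique:
  assumes fin: "finite \<C>"
    and antichain: "\<And>c d. c \<in> \<C> \<Longrightarrow> d \<in> \<C> \<Longrightarrow> d \<subseteq> c \<Longrightarrow> d = c"
    and HA: "compressed_E \<C> H A" and AA': "compressed_E \<C> A A'" and A'H: "A' \<noteq> H"
    and deg_A: "degree (compressed_V \<C>) (compressed_E \<C>) A = 2"
    and deg_A': "degree (compressed_V \<C>) (compressed_E \<C>) A' = 2"
  shows "\<exists>a \<in> H \<inter> A. {S \<in> compressed_V \<C>. a \<in> S} = {A, H}"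
proof -
  have fin_nbrs: "finite (compressed_nbrs \<C> S)" for S
    using finite_compressed_V[OF fin] by (simp add: compressed_nbrs_def)
  have A: "A \<in> compressed_V \<C>" "H \<in> compressed_nbrs \<C> A" "A' \<in> compressed_nbrs \<C> A"
    using HA AA' by (auto simp: compressed_E_def compressed_nbrs_def)
  have "{H, A'} \<subseteq> compressed_nbrs \<C> A" "card {H, A'} = card (compressed_nbrs \<C> A)"
    using A A'H deg_A degree_compressed_eq_card_nbrs[OF A(1)] by auto
  then have nbrs_A: "compressed_nbrs \<C> A = {H, A'}"
    using card_subset_eq[OF fin_nbrs] by metis
  from A(1) show ?thesis
  proof (cases rule: compressed_V_cases)
    case (1 i)
    then show ?thesis
      using path_through_singleton_degree_ge_three[OF fin antichain
          HA[unfolded 1(1)] AA'[unfolded 1(1)] A'H] deg_A'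
      by simp
  next
    case (2 p q)
    have "p \<in> H \<or> q \<in> H" using HA 2 by (auto simp: compressed_E_def)
    then obtain x y where xy: "A = {x, y}" "x \<noteq> y" "x \<in> H"
      using 2 by (metis insert_commute)
    obtain T where T: "T \<in> compressed_nbrs \<C> A" "y \<in> T" "x \<notin> T"
      using doubleton_nbr_avoiding[OF antichain _ xy(2)] A(1) unfolding xy(1) by blast
    have "x \<notin> A'" using T nbrs_A xy(3) by auto
    have "{S \<in> compressed_V \<C>. x \<in> S} = {A, H}"
    proof (intro equalityI subsetI)
      fix S assume S: "S \<in> {S \<in> compressed_V \<C>. x \<in> S}"
      show "S \<in> {A, H}"
      proof (cases "S = A")
        case False
        then have "S \<in> compressed_nbrs \<C> A" using S xy(1) by (auto simp: compressed_nbrs_def)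
        then show ?thesis using nbrs_A S \<open>x \<notin> A'\<close> by auto
      qed simp
    next
      fix S assume "S \<in> {A, H}"
      then show "S \<in> {S \<in> compressed_V \<C>. x \<in> S}"
        using A(1,2) xy by (auto simp: compressed_nbrs_def)
    qed
    then show ?thesis using xy by blast
  qed
qed

lemma degree_le_two_if_private_cliques:
  assumes H: "H \<in> compressed_V \<C>" "a \<in> H" "c \<in> H"
    and a: "{S \<in> compressed_V \<C>. a \<in> S} = {A, H}"
    and c: "{S \<in> compressed_V \<C>. c \<in> S} = {B, H}"
    and "A \<noteq> B" "A \<noteq> H"
  shows "degree (compressed_V \<C>) (compressed_E \<C>) H \<le> 2"
proof -
  have "a \<noteq> c" using a c \<open>A \<noteq> B\<close> \<open>A \<noteq> H\<close> by (metis doubleton_eq_iff)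
  then have "H = {a, c}" using compressed_V_eq_doubleton H by blast
  then have "compressed_nbrs \<C> H \<subseteq> {A, B}"
    using a c by (auto simp: compressed_nbrs_def)
  then have "card (compressed_nbrs \<C> H) \<le> card {A, B}" by (simp add: card_mono)
  also have "\<dots> \<le> 2" by (simp add: card_insert_if)
  finally show ?thesis using degree_compressed_eq_card_nbrs[OF H(1)] by simp
qed

lemma suspended_cycle_rotate_hub:
  assumes "suspended_cycle V E us"
  obtains ws where "length ws = length us" "distinct ws" "set ws \<subseteq> V"
    "\<And>i. i < length ws \<Longrightarrow> E (ws ! i) (ws ! ((i + 1) mod length ws))"
    "degree V E (ws ! 0) > 2"
    "\<And>i. 0 < i \<Longrightarrow> i < length ws \<Longrightarrow> degree V E (ws ! i) = 2"
proof -
  define t where "t = length us"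
  obtain k where k: "k < t" "degree V E (us ! k) > 2"
    and deg2: "\<And>i. i < t \<Longrightarrow> i \<noteq> k \<Longrightarrow> degree V E (us ! i) = 2"
    using assms unfolding suspended_cycle_def t_def by blast
  define ws where "ws = rotate k us"
  have nth_ws: "ws ! i = us ! ((k + i) mod t)" if "i < t" for i
    using that nth_rotate by (simp add: ws_def t_def)
  have "E (ws ! i) (ws ! ((i + 1) mod t))" if "i < t" for i
  proof -
    have "ws ! ((i + 1) mod t) = us ! (((k + i) mod t + 1) mod t)"
      using nth_ws[of "(i + 1) mod t"] k(1) by (simp add: mod_Suc_eq mod_add_right_eq)
    moreover have "E (us ! ((k + i) mod t)) (us ! (((k + i) mod t + 1) mod t))"
      using assms k(1) unfolding suspended_cycle_def t_def
      by (metis mod_less_divisor gr_implies_not0 neq0_conv)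
    ultimately show ?thesis using nth_ws[OF that] by simp
  qed
  moreover have "degree V E (ws ! i) = 2" if "0 < i" "i < t" for i
  proof -
    have "(k + i) mod t \<noteq> k" using that k(1) by (auto simp: mod_if)
    then show ?thesis using deg2 nth_ws that by simp
  qed
  moreover have "ws ! 0 = us ! k" using nth_ws[of 0] k(1) by simp
  moreover have "length ws = t" "distinct ws" "set ws \<subseteq> V"
    using assms unfolding suspended_cycle_def ws_def t_def by auto
  ultimately show ?thesis using that k(2) t_def by metis
qed

lemma suspended_cycle_hub_paths:
  assumes "suspended_cycle V E us"
  obtains H A A' B B' where "H \<in> V" "degree V E H > 2"
    "E H A" "E A A'" "E B' B" "E B H" "A' \<noteq> H" "B' \<noteq> H" "A \<noteq> B" "A \<noteq> H"
    "degree V E A = 2" "degree V E A' = 2" "degree V E B = 2" "degree V E B' = 2"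
proof -
  obtain ws where len: "length ws = length us" and ws: "distinct ws" "set ws \<subseteq> V"
    and edge: "\<And>i. i < length ws \<Longrightarrow> E (ws ! i) (ws ! ((i + 1) mod length ws))"
    and hub: "degree V E (ws ! 0) > 2"
    and deg2: "\<And>i. 0 < i \<Longrightarrow> i < length ws \<Longrightarrow> degree V E (ws ! i) = 2"
    using suspended_cycle_rotate_hub[OF assms] by blast
  define t where "t = length ws"
  have t: "t \<ge> 3" using assms len by (simp add: suspended_cycle_def t_def)
  have distinct_nth: "ws ! i \<noteq> ws ! j" if "i < t" "j < t" "i \<noteq> j" for i j
    using ws(1) that by (simp add: nth_eq_iff_index_eq t_def)
  have edge_t: "E (ws ! i) (ws ! ((i + 1) mod t))" if "i < t" for i
    using edge that by (simp add: t_def)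
  have wrap: "t - 1 + 1 = t" "t - 2 + 1 = t - 1" "(0::nat) + 1 = 1" "(1::nat) + 1 = 2"
    using t by auto
  have "E (ws ! 0) (ws ! 1)" "E (ws ! 1) (ws ! 2)"
    "E (ws ! (t - 2)) (ws ! (t - 1))" "E (ws ! (t - 1)) (ws ! 0)"
    using edge_t[of 0] edge_t[of 1] edge_t[of "t - 2"] edge_t[of "t - 1"] t
    unfolding wrap by simp_all
  moreover have "ws ! 2 \<noteq> ws ! 0" "ws ! (t - 2) \<noteq> ws ! 0"
    "ws ! 1 \<noteq> ws ! (t - 1)" "ws ! 1 \<noteq> ws ! 0"
    using t by (intro distinct_nth; simp)+
  moreover have "degree V E (ws ! i) = 2" if "i \<in> {1, 2, t - 1, t - 2}" for i
    using deg2[of i] that t by (auto simp: t_def)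
  moreover have "ws ! 0 \<in> V"
    using ws(2) nth_mem[of 0 ws] t unfolding t_def by fastforce
  ultimately show ?thesis using that hub by simp
qed

text \<open>Only finiteness and maximality of the covering are used: simple intersection is already
  built into \<open>compressed_V\<close>, whose vertices are index sets of size at most two.\<close>
theorem mainTheorem19:
  fixes V :: "'a set" and E :: "'a \<Rightarrow> 'a \<Rightarrow> bool" and \<C> :: "'a set set"
  assumes "sgraph V E"
    and "min_max_clique_covering V E \<C>"
    and "simple_intersection \<C>"
  shows "\<not> (\<exists>us. suspended_cycle (compressed_V \<C>) (compressed_E \<C>) us)"
proof
  assume "\<exists>us. suspended_cycle (compressed_V \<C>) (compressed_E \<C>) us"
  then obtain us where "suspended_cycle (compressed_V \<C>) (compressed_E \<C>) us" ..
  then obtain H A A' B B' where H: "H \<in> compressed_V \<C>"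
    and hub: "degree (compressed_V \<C>) (compressed_E \<C>) H > 2"
    and path_A: "compressed_E \<C> H A" "compressed_E \<C> A A'" "A' \<noteq> H"
    and path_B: "compressed_E \<C> B' B" "compressed_E \<C> B H" "B' \<noteq> H"
    and "A \<noteq> B" "A \<noteq> H"
    and deg2: "degree (compressed_V \<C>) (compressed_E \<C>) A = 2"
      "degree (compressed_V \<C>) (compressed_E \<C>) A' = 2"
      "degree (compressed_V \<C>) (compressed_E \<C>) B = 2"
      "degree (compressed_V \<C>) (compressed_E \<C>) B' = 2"
    by (rule suspended_cycle_hub_paths)
  have fin: "finite \<C>"
    using assms(2) by (simp add: min_max_clique_covering_def clique_covering_def)
  note antichain = min_max_clique_covering_antichain[OF assms(2)]
  obtain a where a: "a \<in> H" "{S \<in> compressed_V \<C>. a \<in> S} = {A, H}"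
    using degree_two_path_private_clique[OF fin antichain path_A deg2(1,2)] by blast
  obtain c where c: "c \<in> H" "{S \<in> compressed_V \<C>. c \<in> S} = {B, H}"
    using degree_two_path_private_clique[OF fin antichain compressed_E_sym[OF path_B(2)]
        compressed_E_sym[OF path_B(1)] path_B(3) deg2(3,4)] by blast
  have "degree (compressed_V \<C>) (compressed_E \<C>) H \<le> 2"
    using degree_le_two_if_private_cliques[OF H a(1) c(1) a(2) c(2) \<open>A \<noteq> B\<close> \<open>A \<noteq> H\<close>] .
  with hub show False by simp
qed

end
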